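(* Let $\varphi\in\mathbb{T}=\mathbb{R}/\mathbb{Z}$ be badly approximable and let $P\subseteq\mathbb{T}$ be an arc of length at least $\frac12$. For $x_0\in\mathbb{T}$ and each $k\in\mathbb{N}$ define the sequence $(x_i^k)_{i\ge0}$ by $x_0^k=x_0$ and $x_{i+1}^k=x_i^k+k\varphi$ (mod $1$). Then there exist $r>0$ and $d\in\mathbb{N}$, independent of $x_0$, such that $$\left|\{x_i^k : i\in\{1,2,\dots,dk\},\ x_i^k\in P\}\right|\ \ge\ rk$$ for all sufficiently large $k$.
   Context: A real number $\varphi$ is badly approximable if there exists $c>0$ such that $\left|\varphi-\frac pq\right|>\frac{c}{q^2}$ for all rationals $\frac pq$ (with $q\ge1$). The circle $\mathbb{T}$ is identified with $\mathbb{R}/\mathbb{Z}$. *)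

theory Defs
  imports Complex_Main
begin

text \<open>The circle T = R/Z is represented by the representatives in [0,1);
  the projection R -> T is frac.\<close>

definition badly_approximable :: "real \<Rightarrow> bool" where
  "badly_approximable \<phi> \<longleftrightarrow>
     (\<exists>c>0. \<forall>p::int. \<forall>q::int. q \<ge> 1 \<longrightarrow> \<bar>\<phi> - real_of_int p / real_of_int q\<bar> > c / (real_of_int q)^2)"

text \<open>An arc of length l in T: a set lying between the projections of the open
  interval (a, a+l) and of the closed interval [a, a+l] (so open, closed and
  half-open arcs are all covered); arcs have length at most 1.\<close>

definition is_arc :: "real set \<Rightarrow> real \<Rightarrow> bool" where
  "is_arc P l \<longleftrightarrow> 0 \<le> l \<and> l \<le> 1 \<and>
     (\<exists>a. frac ` {a<..<a+l} \<subseteq> P \<and> P \<subseteq> frac ` {a..a+l})"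

definition orbit_pt :: "real \<Rightarrow> real \<Rightarrow> nat \<Rightarrow> nat \<Rightarrow> real" where
  "orbit_pt \<phi> x0 k i = frac (x0 + real i * (real k * \<phi>))"

end

theory Submission
  imports Defs
begin

text \<open>Badly approximable means c / q < |q \<phi> - p|. Fix k and let s be the signed distance
  from k \<phi> to the nearest integer, so c / k < |s| < 1/2. The least q with q |s| \<ge> 1/8 is
  below k / (8 c) + 1, and the step q k \<phi> is, mod 1, some \<sigma> with 1/8 \<le> |\<sigma>| < 1/2. A walk
  with steps shorter than 1/2 and total length 12 |\<sigma>| \<ge> 3/2 cannot jump over an arc of
  length 1/2, so every progression u, u + q, ..., u + 12 q of indices meets P. Hence the
  indices in {1..d k} hitting P, shifted by 0, q, ..., 12 q, cover {1..d k - 12 q}, which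
  gives at least (d k - 12 q) / 13 \<ge> k / 13 hits; they are distinct points because
  \<phi> is irrational.\<close>

lemma badly_approximableE:
  assumes "badly_approximable \<phi>"
  obtains c where "c > 0"
    and "\<And>p q::int. q \<ge> 1 \<Longrightarrow> c / real_of_int q < \<bar>real_of_int q * \<phi> - real_of_int p\<bar>"
proof -
  obtain c where "c > 0" and c: "\<And>p q::int. q \<ge> 1 \<Longrightarrow> c / (real_of_int q)\<^sup>2 < \<bar>\<phi> - real_of_int p / real_of_int q\<bar>"
    using assms unfolding badly_approximable_def by blast
  have "c / real_of_int q < \<bar>real_of_int q * \<phi> - real_of_int p\<bar>" if "q \<ge> 1" for p q :: int
  proof -
    have q: "real_of_int q > 0" using that by simp
    have "c / real_of_int q = q * (c / (real_of_int q)\<^sup>2)"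
      using q by (simp add: power2_eq_square)
    also have "\<dots> < q * \<bar>\<phi> - p / q\<bar>"
      by (rule mult_strict_left_mono[OF c[OF that] q])
    also have "\<dots> = \<bar>real_of_int q * \<phi> - real_of_int p\<bar>"
      using q by (simp add: abs_mult[symmetric] field_simps)
    finally show ?thesis .
  qed
  with \<open>c > 0\<close> show thesis by (rule that)
qed

lemma badly_approximable_irrational:
  assumes "badly_approximable \<phi>"
  shows "\<phi> \<notin> \<rat>"
proof
  assume "\<phi> \<in> \<rat>"
  then obtain p q :: int where "q > 0" and \<phi>: "\<phi> = p / q"
    by (rule Rats_cases')
  obtain c where "c > 0"
    and "c / real_of_int q < \<bar>real_of_int q * \<phi> - real_of_int p\<bar>"
    using badly_approximableE[OF assms] \<open>q > 0\<close> by (metis int_one_le_iff_zero_less)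
  moreover have "c / real_of_int q > 0"
    using \<open>c > 0\<close> \<open>q > 0\<close> by simp
  ultimately show False
    using \<open>q > 0\<close> by (simp add: \<phi>)
qed

lemma inj_on_orbit_pt:
  assumes "\<phi> \<notin> \<rat>" and "k \<ge> 1"
  shows "inj_on (orbit_pt \<phi> x0 k) A"
proof (rule inj_onI, rule ccontr)
  fix i j assume eq: "orbit_pt \<phi> x0 k i = orbit_pt \<phi> x0 k j" and "i \<noteq> j"
  from eq obtain n :: int where "x0 + real i * (real k * \<phi>) = x0 + real j * (real k * \<phi>) + n"
    unfolding orbit_pt_def by (erule frac_eqE)
  then have "(real i - real j) * real k * \<phi> = n"
    by (simp add: algebra_simps)
  moreover have "(real i - real j) * real k \<noteq> 0"
    using \<open>i \<noteq> j\<close> \<open>k \<ge> 1\<close> by simp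
  ultimately have "\<phi> = n / ((real i - real j) * real k)"
    by (simp add: field_simps)
  then show False
    using assms(1) by simp
qed

lemma exists_nat_mult_in_interval:
  fixes a b t :: real
  assumes "0 < a" and "2 * a \<le> b" and "0 < t" and "t < b"
  obtains m :: nat where "m \<ge> 1" and "a \<le> m * t" and "m * t < b" and "m * t < a + t"
proof
  define m where "m = nat \<lceil>a / t\<rceil>"
  have "a / t > 0" using assms by simp
  then have m: "a / t \<le> real m" "real m < a / t + 1"
    unfolding m_def by linarith+
  then show "m \<ge> 1"
    using \<open>a / t > 0\<close> by simp
  show "a \<le> m * t" "m * t < a + t"
    using m \<open>t > 0\<close> by (simp_all add: field_simps)
  show "m * t < b"
  proof (cases "a \<le> t")
    case True
    then have "a / t \<le> 1"
      using \<open>t > 0\<close> by simp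
    then have "m = 1"
      using m \<open>m \<ge> 1\<close> by linarith
    then show ?thesis
      using \<open>t < b\<close> by simp
  next
    case False
    then show ?thesis
      using \<open>m * t < a + t\<close> assms by linarith
  qed
qed

lemma irrational_abs_diff_round_less:
  fixes x :: real
  assumes "x \<notin> \<rat>"
  shows "\<bar>x - of_int (round x)\<bar> < 1/2"
proof -
  have "\<bar>x - of_int (round x)\<bar> \<le> 1/2"
    unfolding round_def by linarith
  moreover have "real_of_int (round x) + 1/2 \<in> \<rat>" and "real_of_int (round x) - 1/2 \<in> \<rat>"
    by (intro Rats_add Rats_diff Rats_of_int Rats_divide Rats_1 Rats_number_of)+
  with assms have "x \<noteq> real_of_int (round x) + 1/2" and "x \<noteq> real_of_int (round x) - 1/2"
    by metis+
  ultimately show ?thesis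
    by linarith
qed

lemma badly_approximable_return_step:
  fixes \<phi> c :: real and k :: nat
  assumes "\<phi> \<notin> \<rat>" and "c > 0"
    and bound: "\<And>p q::int. q \<ge> 1 \<Longrightarrow> c / real_of_int q < \<bar>real_of_int q * \<phi> - real_of_int p\<bar>"
    and "k \<ge> 1"
  obtains q :: nat and p :: int and \<sigma> :: real
  where "q \<ge> 1" and "real q < real k / (8 * c) + 1"
    and "real q * (real k * \<phi>) = of_int p + \<sigma>" and "1/8 \<le> \<bar>\<sigma>\<bar>" and "\<bar>\<sigma>\<bar> < 1/2"
proof -
  define r where "r = round (real k * \<phi>)"
  define s where "s = real k * \<phi> - r"
  have k\<phi>: "real k * \<phi> = r + s"
    by (simp add: s_def)
  have "real k * \<phi> \<notin> \<rat>"
  proof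
    assume "real k * \<phi> \<in> \<rat>"
    then have "real k * \<phi> / real k \<in> \<rat>"
      by (intro Rats_divide Rats_of_nat)
    moreover have "real k * \<phi> / real k = \<phi>"
      using \<open>k \<ge> 1\<close> by simp
    ultimately show False
      using \<open>\<phi> \<notin> \<rat>\<close> by simp
  qed
  then have "\<bar>s\<bar> < 1/2"
    unfolding s_def r_def by (rule irrational_abs_diff_round_less)
  have s_gt: "c / real k < \<bar>s\<bar>"
    using bound[of "int k" r] \<open>k \<ge> 1\<close> by (simp add: s_def)
  moreover have "0 < c / real k"
    using \<open>c > 0\<close> \<open>k \<ge> 1\<close> by simp
  ultimately have "0 < \<bar>s\<bar>"
    by linarith
  obtain m :: nat where "m \<ge> 1" and m: "1/8 \<le> m * \<bar>s\<bar>" "m * \<bar>s\<bar> < 1/2"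
    and m_less: "m * \<bar>s\<bar> < 1/8 + \<bar>s\<bar>"
    by (rule exists_nat_mult_in_interval[of "1/8" "1/2" "\<bar>s\<bar>"])
      (use \<open>0 < \<bar>s\<bar>\<close> \<open>\<bar>s\<bar> < 1/2\<close> in auto)
  have "real m < 1 / (8 * \<bar>s\<bar>) + 1"
    using m_less \<open>0 < \<bar>s\<bar>\<close> by (simp add: field_simps)
  also have "1 / (8 * \<bar>s\<bar>) < real k / (8 * c)"
    using s_gt \<open>0 < \<bar>s\<bar>\<close> \<open>c > 0\<close> \<open>k \<ge> 1\<close> by (simp add: field_simps)
  finally have "real m < real k / (8 * c) + 1"
    by simp
  then show thesis
  proof (rule that[OF \<open>m \<ge> 1\<close>])
    show "real m * (real k * \<phi>) = of_int (int m * r) + m * s"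
      unfolding k\<phi> by (simp add: algebra_simps)
    show "1/8 \<le> \<bar>real m * s\<bar>" "\<bar>real m * s\<bar> < 1/2"
      using m by (simp_all add: abs_mult)
  qed
qed

lemma discrete_walk_enters_interval:
  fixes z u \<sigma> w :: real
  assumes "0 < \<sigma>" and "\<sigma> < w" and "z \<le> u" and "u + w \<le> z + real J * \<sigma>"
  shows "\<exists>j\<le>J. u < z + real j * \<sigma> \<and> z + real j * \<sigma> < u + w"
proof -
  define j where "j = (LEAST j. u < z + real j * \<sigma>)"
  have "u < z + real J * \<sigma>"
    using assms by linarith
  then have above: "u < z + real j * \<sigma>" and "j \<le> J"
    unfolding j_def by (auto intro: LeastI Least_le)
  have "j \<noteq> 0"
    using above \<open>z \<le> u\<close> by (intro notI) simp
  then obtain i where "j = Suc i"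
    using not0_implies_Suc by blast
  then have "\<not> u < z + real i * \<sigma>"
    using not_less_Least[of i "\<lambda>j. u < z + real j * \<sigma>"] unfolding j_def by simp
  moreover have "real j * \<sigma> = real i * \<sigma> + \<sigma>"
    using \<open>j = Suc i\<close> by (simp add: algebra_simps)
  ultimately have "z + real j * \<sigma> < u + w"
    using \<open>\<sigma> < w\<close> by linarith
  with above \<open>j \<le> J\<close> show ?thesis
    by blast
qed

text \<open>For negative \<sigma> the walk is run backwards from its endpoint z + J \<sigma>.\<close>

lemma frac_walk_enters_arc:
  fixes z a \<sigma> w :: real
  assumes "0 < \<bar>\<sigma>\<bar>" and "\<bar>\<sigma>\<bar> < w" and "1 + w \<le> real J * \<bar>\<sigma>\<bar>"
  shows "\<exists>j\<le>J. frac (z + real j * \<sigma>) \<in> frac ` {a<..<a+w}"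
proof -
  have pos: "\<exists>j\<le>J. frac (z + real j * \<sigma>) \<in> frac ` {a<..<a+w}"
    if step: "0 < \<sigma>" "\<sigma> < w" "1 + w \<le> real J * \<sigma>" for z \<sigma>
  proof -
    define n where "n = \<lceil>z - a\<rceil>"
    have "z \<le> a + n" "a + n < z + 1"
      unfolding n_def by linarith+
    then have "a + n + w \<le> z + real J * \<sigma>"
      using step(3) by linarith
    then obtain j where "j \<le> J" and "a + n < z + real j * \<sigma>" "z + real j * \<sigma> < a + n + w"
      using discrete_walk_enters_interval[OF step(1,2) \<open>z \<le> a + n\<close>] by blast
    then have "z + real j * \<sigma> - n \<in> {a<..<a+w}"
      by simp
    moreover have "frac (z + real j * \<sigma>) = frac (z + real j * \<sigma> - n)"
      using frac_add_of_int_right[of "z + real j * \<sigma> - n" n] by simp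
    ultimately show ?thesis
      using \<open>j \<le> J\<close> by blast
  qed
  show ?thesis
  proof (cases "\<sigma> > 0")
    case True
    then show ?thesis
      using pos[of \<sigma> z] assms(2,3) by simp
  next
    case False
    then have "0 < - \<sigma>" "- \<sigma> < w" "1 + w \<le> real J * - \<sigma>"
      using assms by simp_all
    then obtain i where "i \<le> J" and i: "frac (z + real J * \<sigma> + real i * - \<sigma>) \<in> frac ` {a<..<a+w}"
      using pos[of "- \<sigma>" "z + real J * \<sigma>"] by blast
    have "z + real J * \<sigma> + real i * - \<sigma> = z + real (J - i) * \<sigma>"
      using \<open>i \<le> J\<close> by (simp add: of_nat_diff algebra_simps)
    with i have "frac (z + real (J - i) * \<sigma>) \<in> frac ` {a<..<a+w}"
      by (simp only:)
    then show ?thesis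
      by (intro exI[of _ "J - i"]) simp
  qed
qed

lemma orbit_pt_returns_to_half_arc:
  assumes "real q * (real k * \<phi>) = of_int p + \<sigma>" and "1/8 \<le> \<bar>\<sigma>\<bar>" and "\<bar>\<sigma>\<bar> < 1/2"
  shows "\<exists>j\<le>12. orbit_pt \<phi> x0 k (u + j * q) \<in> frac ` {a<..<a+1/2}"
proof -
  define z where "z = x0 + real u * (real k * \<phi>)"
  have "orbit_pt \<phi> x0 k (u + j * q) = frac (z + real j * \<sigma>)" for j
  proof -
    have "x0 + real (u + j * q) * (real k * \<phi>) = z + real j * (real q * (real k * \<phi>))"
      by (simp add: z_def algebra_simps)
    also have "\<dots> = z + real j * \<sigma> + of_int (int j * p)"
      unfolding assms(1) by (simp add: algebra_simps)
    finally show ?thesis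
      unfolding orbit_pt_def by (simp only: frac_add_of_int_right)
  qed
  moreover have "\<exists>j\<le>12. frac (z + real j * \<sigma>) \<in> frac ` {a<..<a+1/2}"
    using assms by (intro frac_walk_enters_arc) auto
  ultimately show ?thesis
    by simp
qed

lemma card_le_card_mult_card_if_shifts_cover:
  fixes A H S :: "'a::cancel_ab_semigroup_add set"
  assumes "finite H" and "finite S" and "\<And>u. u \<in> A \<Longrightarrow> \<exists>s\<in>S. u + s \<in> H"
  shows "card A \<le> card S * card H"
proof -
  have "A \<subseteq> (\<Union>s\<in>S. (\<lambda>h. h - s) ` H)"
    using assms(3) by (force intro: image_eqI[of _ _ "_ + _"])
  then have "card A \<le> card (\<Union>s\<in>S. (\<lambda>h. h - s) ` H)"
    using assms(1,2) by (intro card_mono) auto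
  also have "\<dots> \<le> (\<Sum>s\<in>S. card ((\<lambda>h. h - s) ` H))"
    using assms(2) by (rule card_UN_le)
  also have "\<dots> \<le> (\<Sum>s\<in>S. card H)"
    by (intro sum_mono card_image_le assms(1))
  finally show ?thesis
    by simp
qed

lemma card_orbit_pts_in_half_arc_ge:
  assumes "real q * (real k * \<phi>) = of_int p + \<sigma>" and "1/8 \<le> \<bar>\<sigma>\<bar>" and "\<bar>\<sigma>\<bar> < 1/2"
    and arc: "frac ` {a<..<a+1/2} \<subseteq> P"
  shows "n - 12 * q \<le> 13 * card {i \<in> {1..n}. orbit_pt \<phi> x0 k i \<in> P}"
proof -
  define H where "H = {i \<in> {1..n}. orbit_pt \<phi> x0 k i \<in> P}"
  have "card {1..n - 12 * q} \<le> card ((\<lambda>j. j * q) ` {0..12}) * card H"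
  proof (rule card_le_card_mult_card_if_shifts_cover)
    fix u assume u: "u \<in> {1..n - 12 * q}"
    obtain j where "j \<le> 12" and j: "orbit_pt \<phi> x0 k (u + j * q) \<in> frac ` {a<..<a+1/2}"
      using orbit_pt_returns_to_half_arc[OF assms(1-3)] by blast
    have "j * q \<le> 12 * q"
      using \<open>j \<le> 12\<close> by simp
    moreover from u have "1 \<le> u" "u + 12 * q \<le> n"
      by auto
    ultimately have "u + j * q \<in> {1..n}"
      unfolding atLeastAtMost_iff by linarith
    moreover have "orbit_pt \<phi> x0 k (u + j * q) \<in> P"
      using j arc by blast
    ultimately show "\<exists>s\<in>(\<lambda>j. j * q) ` {0..12}. u + s \<in> H"
      using \<open>j \<le> 12\<close> unfolding H_def by (intro bexI[of _ "j * q"]) auto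
  qed (simp_all add: H_def)
  also have "card ((\<lambda>j. j * q) ` {0..12::nat}) \<le> 13"
    using card_image_le[of "{0..12::nat}" "\<lambda>j. j * q"] by simp
  finally show ?thesis
    by (simp add: H_def)
qed

lemma card_orbit_pts_in_arc_ge:
  fixes \<phi> c :: real and d k :: nat
  assumes "\<phi> \<notin> \<rat>" and "c > 0"
    and bound: "\<And>p q::int. q \<ge> 1 \<Longrightarrow> c / real_of_int q < \<bar>real_of_int q * \<phi> - real_of_int p\<bar>"
    and arc: "frac ` {a<..<a+1/2} \<subseteq> P"
    and d: "2 / c + 2 \<le> real d" and "k \<ge> 12"
  shows "real k / 13 \<le> real (card {orbit_pt \<phi> x0 k i | i. i \<in> {1..d*k} \<and> orbit_pt \<phi> x0 k i \<in> P})"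
proof -
  define H where "H = {i \<in> {1..d*k}. orbit_pt \<phi> x0 k i \<in> P}"
  have "k \<ge> 1"
    using \<open>k \<ge> 12\<close> by simp
  then obtain q p \<sigma> where q: "real q < real k / (8 * c) + 1"
    and step: "real q * (real k * \<phi>) = of_int p + \<sigma>" "1/8 \<le> \<bar>\<sigma>\<bar>" "\<bar>\<sigma>\<bar> < 1/2"
    using badly_approximable_return_step[OF \<open>\<phi> \<notin> \<rat>\<close> \<open>c > 0\<close> bound] by blast
  have large: "real k \<le> real d * real k - 12 * real q"
  proof -
    have "(2 / c + 2) * real k \<le> real d * real k"
      using d by (simp add: mult_right_mono)
    moreover have "12 * real q < 3 * real k / (2 * c) + 12"
      using q by simp
    moreover have "(2 / c + 2) * real k - (3 * real k / (2 * c) + 12) = real k / (2 * c) + 2 * real k - 12"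
      using \<open>c > 0\<close> by (simp add: field_simps)
    moreover have "0 \<le> real k / (2 * c)"
      using \<open>c > 0\<close> by simp
    ultimately show ?thesis
      using \<open>k \<ge> 12\<close> by linarith
  qed
  then have "real (12 * q) \<le> real (d * k)"
    by simp
  then have "12 * q \<le> d * k"
    by (simp only: of_nat_le_iff)
  then have "real k \<le> real (d * k - 12 * q)"
    using large by (simp add: of_nat_diff)
  also have "\<dots> \<le> 13 * real (card H)"
    using card_orbit_pts_in_half_arc_ge[OF step arc, of "d * k" x0] unfolding H_def of_nat_le_iff[symmetric] by simp
  finally have "real k / 13 \<le> real (card H)"
    by simp
  moreover have "{orbit_pt \<phi> x0 k i | i. i \<in> {1..d*k} \<and> orbit_pt \<phi> x0 k i \<in> P} = orbit_pt \<phi> x0 k ` H"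
    unfolding H_def by blast
  moreover have "card (orbit_pt \<phi> x0 k ` H) = card H"
    using inj_on_orbit_pt[OF \<open>\<phi> \<notin> \<rat>\<close> \<open>k \<ge> 1\<close>] by (rule card_image)
  ultimately show ?thesis
    by simp
qed

theorem theorem3p4:
  fixes \<phi> :: real and P :: "real set" and l :: real
  assumes "badly_approximable \<phi>"
    and "is_arc P l" and "l \<ge> 1/2"
  shows "\<exists>r::real. \<exists>d::nat. r > 0 \<and>
           (\<forall>x0::real. \<forall>\<^sub>F k in sequentially.
              real (card {orbit_pt \<phi> x0 k i | i. i \<in> {1..d*k} \<and> orbit_pt \<phi> x0 k i \<in> P})
                \<ge> r * real k)"
proof -
  obtain a where "frac ` {a<..<a+l} \<subseteq> P"
    using assms(2) unfolding is_arc_def by blast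
  moreover have "{a<..<a+1/2} \<subseteq> {a<..<a+l}"
    using \<open>l \<ge> 1/2\<close> by auto
  ultimately have arc: "frac ` {a<..<a+1/2} \<subseteq> P"
    by blast
  obtain c where "c > 0"
    and bound: "\<And>p q::int. q \<ge> 1 \<Longrightarrow> c / real_of_int q < \<bar>real_of_int q * \<phi> - real_of_int p\<bar>"
    using badly_approximableE[OF assms(1)] by blast
  define d where "d = nat \<lceil>2 / c\<rceil> + 2"
  have "2 / c + 2 \<le> real d"
    unfolding d_def by linarith
  note count = card_orbit_pts_in_arc_ge[OF badly_approximable_irrational[OF assms(1)] \<open>c > 0\<close> bound arc this]
  show ?thesis
  proof (intro exI[of _ "1/13"] exI[of _ d] conjI allI)
    show "\<forall>\<^sub>F k in sequentially.
            real (card {orbit_pt \<phi> x0 k i | i. i \<in> {1..d*k} \<and> orbit_pt \<phi> x0 k i \<in> P}) \<ge> 1/13 * real k"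
      for x0
      using count by (intro eventually_sequentiallyI[of 12]) simp
  qed simp
qed

end
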